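(* Let $V\subseteq\mathbb R$, $(\Omega,\Psi(z)dz)$ a probability space, and for each $z$ let $f_\epsilon(t,\cdot,z)$ and $\tilde f(t,\cdot,z)$ be probability densities on $V$ at a fixed time $t$. Let $S_{\Delta w}\ge0$ be a bounded measurable smoothing kernel with mesh size $\Delta w>0$, and for $w\in V$ set $(S,g)(t,w,z):=\int_V S_{\Delta w}(w-v)g(t,v,z)\,dv$; assume $\mathrm{Var}[(S,\tilde f)(t,w,\cdot)]>0$ and $\mathrm{Var}[(S,f_\epsilon)(t,w,\cdot)]>0$ for every $w$. Let $z_1,\dots,z_M$ be i.i.d. with density $\Psi$ and, conditionally on them, for each $k$ let $w_1(t,z_k),\dots,w_N(t,z_k)$ be i.i.d. with law $f_\epsilon(t,\cdot,z_k)$, independent across $k$; let $f_{\epsilon,N,\Delta w}(t,w,z_k)=\frac1N\sum_{i=1}^NS_{\Delta w}(w-w_i(t,z_k))$. For each $w$ let $\lambda^*(w)=\mathrm{Cov}[(S,f_\epsilon),(S,\tilde f)]/\mathrm{Var}[(S,\tilde f)]$ and $$E^{\lambda^*}_M[f_{\epsilon,N,\Delta w}](t,w)=\frac1M\sum_{k=1}^Mf_{\epsilon,N,\Delta w}(t,w,z_k)-\lambda^*(w)\Big(\frac1M\sum_{k=1}^M(S,\tilde f)(t,w,z_k)-\mathbb E[(S,\tilde f)(t,w,\cdot)]\Big).$$ Assume that for some $1\le p\le\infty$, $q>0$ and constant $C_{\mathbb E[f]}$, $\|\mathbb E[f_\epsilon](t,\cdot)-\mathbb E[(S,f_\epsilon)](t,\cdot)\|_{L^p(V)}\le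 C_{\mathbb E[f]}(\Delta w)^q$. Then $$\big\|\mathbb E[f_\epsilon](t,\cdot)-E^{\lambda^*}_M[f_{\epsilon,N,\Delta w}](t,\cdot)\big\|_{L^p(V,L^2(\Omega,L^2(V)))}\le\frac{\Big\|\big(1-\rho^2_{(S,f_\epsilon),(S,\tilde f)}\big)^{1/2}\nu_{(S,f_\epsilon)}\Big\|_{L^p(V)}}{M^{1/2}}+\frac{\|\sigma_{S,M}\|_{L^p(V)}}{N^{1/2}}+C_{\mathbb E[f]}(\Delta w)^q.$$
   Context: $f_\epsilon$ is the solution of a Boltzmann-type kinetic model with uncertain parameter $z$ and $\tilde f$ the solution of its mean-field (Fokker–Planck) approximation, whose values are assumed computed exactly. Notation: $\mathbb E,\mathrm{Var},\mathrm{Cov}$ are with respect to $z\sim\Psi$ (over the i.i.d. parameter samples where applicable); $\mathbb E_V$ is expectation over the particle samples. For a random function $g(w)$, $\|g\|_{L^p(V,L^2(\Omega,L^2(V)))}:=\big\|\,\mathbb E[\mathbb E_V[g^2]]^{1/2}\big\|_{L^p(V)}$. For $w\in V$: $\nu^2_{(S,f_\epsilon)}(t,w)=\mathrm{Var}[(S,f_\epsilon)(t,w,\cdot)]$; $\rho_{(S,f_\epsilon),(S,\tilde f)}(t,w)$ is the Pearson correlation coefficient in $z$ between $(S,f_\epsilon)(t,w,\cdot)$ and $(S,\tilde f)(t,w,\cdot)$; $\sigma_S^2(t,w,z)=\int_V\big(S_{\Delta w}(w-v)-(S,f_\epsilon)(t,w,z)\big)^2f_\epsilon(t,v,z)\,dv$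 and $\sigma^2_{S,M}(t,w)=\mathbb E[\sigma_S^2(t,w,\cdot)]$. *)

theory Defs
  imports "HOL-Probability.Probability"
begin

definition enn_powr :: "ennreal \<Rightarrow> real \<Rightarrow> ennreal" where
  "enn_powr x r = (if x = \<top> then \<top> else ennreal (enn2real x powr r))"

definition Lp_norm :: "real set \<Rightarrow> ennreal \<Rightarrow> (real \<Rightarrow> ennreal) \<Rightarrow> ennreal" where
  "Lp_norm V p h =
     (if p = \<top> then esssup lborel (\<lambda>w. indicator V w * h w)
      else enn_powr (\<integral>\<^sup>+ w\<in>V. enn_powr (h w) (enn2real p) \<partial>lborel) (1 / enn2real p))"

definition Lp_norm_real :: "real set \<Rightarrow> ennreal \<Rightarrow> (real \<Rightarrow> real) \<Rightarrow> ennreal" where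
  "Lp_norm_real V p h = Lp_norm V p (\<lambda>w. ennreal \<bar>h w\<bar>)"

definition Ez :: "'z measure \<Rightarrow> ('z \<Rightarrow> real) \<Rightarrow> real" where
  "Ez P X = (\<integral>z. X z \<partial>P)"

definition Varz :: "'z measure \<Rightarrow> ('z \<Rightarrow> real) \<Rightarrow> real" where
  "Varz P X = Ez P (\<lambda>z. (X z - Ez P X)\<^sup>2)"

definition Covz :: "'z measure \<Rightarrow> ('z \<Rightarrow> real) \<Rightarrow> ('z \<Rightarrow> real) \<Rightarrow> real" where
  "Covz P X Y = Ez P (\<lambda>z. (X z - Ez P X) * (Y z - Ez P Y))"

definition Corrz :: "'z measure \<Rightarrow> ('z \<Rightarrow> real) \<Rightarrow> ('z \<Rightarrow> real) \<Rightarrow> real" where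
  "Corrz P X Y = Covz P X Y / (sqrt (Varz P X) * sqrt (Varz P Y))"

(* smoothing (S,g)(w,z) = \<integral>_V S(w-v) g(v,z) dv ; densities are written g z v *)
definition smooth :: "real set \<Rightarrow> (real \<Rightarrow> real) \<Rightarrow> ('z \<Rightarrow> real \<Rightarrow> real) \<Rightarrow> real \<Rightarrow> 'z \<Rightarrow> real" where
  "smooth V S g w z = (\<integral>v\<in>V. S (w - v) * g z v \<partial>lborel)"

definition sigmaS2 :: "real set \<Rightarrow> (real \<Rightarrow> real) \<Rightarrow> ('z \<Rightarrow> real \<Rightarrow> real) \<Rightarrow> real \<Rightarrow> 'z \<Rightarrow> real" where
  "sigmaS2 V S f w z = (\<integral>v\<in>V. (S (w - v) - smooth V S f w z)\<^sup>2 * f z v \<partial>lborel)"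

definition lambda_opt :: "'z measure \<Rightarrow> real set \<Rightarrow> (real \<Rightarrow> real) \<Rightarrow> ('z \<Rightarrow> real \<Rightarrow> real)
    \<Rightarrow> ('z \<Rightarrow> real \<Rightarrow> real) \<Rightarrow> real \<Rightarrow> real" where
  "lambda_opt P V S f ft w =
     Covz P (smooth V S f w) (smooth V S ft w) / Varz P (smooth V S ft w)"

definition kde :: "(real \<Rightarrow> real) \<Rightarrow> nat \<Rightarrow> (nat \<times> nat \<Rightarrow> real) \<Rightarrow> nat \<Rightarrow> real \<Rightarrow> real" where
  "kde S N ws k w = (\<Sum>i<N. S (w - ws (k, i))) / real N"

definition cv_estimator :: "'z measure \<Rightarrow> real set \<Rightarrow> (real \<Rightarrow> real) \<Rightarrow> ('z \<Rightarrow> real \<Rightarrow> real)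
    \<Rightarrow> ('z \<Rightarrow> real \<Rightarrow> real) \<Rightarrow> nat \<Rightarrow> nat \<Rightarrow> real \<Rightarrow> (nat \<Rightarrow> 'z) \<Rightarrow> (nat \<times> nat \<Rightarrow> real) \<Rightarrow> real" where
  "cv_estimator P V S f ft M N w zs ws =
     (\<Sum>k<M. kde S N ws k w) / real M
     - lambda_opt P V S f ft w *
         ((\<Sum>k<M. smooth V S ft w (zs k)) / real M - Ez P (smooth V S ft w))"

(* E[E_V[G]] for a real function G of the samples: z_1..z_M i.i.d. ~ P, and conditionally on
   them the particles ws(k,i), i<N, i.i.d. with density f(z_k, .) on V, independent across k *)
definition EEV :: "'z measure \<Rightarrow> real set \<Rightarrow> ('z \<Rightarrow> real \<Rightarrow> real) \<Rightarrow> nat \<Rightarrow> nat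
    \<Rightarrow> ((nat \<Rightarrow> 'z) \<Rightarrow> (nat \<times> nat \<Rightarrow> real) \<Rightarrow> real) \<Rightarrow> ennreal" where
  "EEV P V f M N G =
     (\<integral>\<^sup>+ zs. (\<integral>\<^sup>+ ws. ennreal (G zs ws) *
          (\<Prod>ki\<in>{..<M} \<times> {..<N}. ennreal (indicator V (ws ki) * f (zs (fst ki)) (ws ki)))
        \<partial>(PiM ({..<M} \<times> {..<N}) (\<lambda>_. lborel)))
      \<partial>(PiM {..<M} (\<lambda>_. P)))"

end

theory Submission
  imports Defs
begin

text \<open>Conditionally on the parameter samples \<open>z\<^sub>k\<close>, the particle errors
  \<open>S(w - w\<^sub>i(z\<^sub>k)) - (S,f)(w,z\<^sub>k)\<close> are independent and centred, and the terms
  \<open>(S,f)(w,z\<^sub>k) - \<lambda> (S,f~)(w,z\<^sub>k)\<close> are i.i.d. in \<open>k\<close>. Hence the mean-square error at \<open>w\<close>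
  splits exactly into \<open>bias\<^sup>2 + Var[(S,f) - \<lambda> (S,f~)]/M + E[\<sigma>\<^sub>S\<^sup>2]/(M N)\<close>, and for the
  optimal \<open>\<lambda>*\<close> the middle variance equals \<open>(1 - \<rho>\<^sup>2) Var[(S,f)]\<close>. Taking square roots
  termwise and then the \<open>L\<^sup>p(V)\<close> norm, Minkowski's inequality yields the three terms of
  the bound, the first of which is the assumed bias estimate.\<close>

section \<open>\<open>L\<^sup>p\<close> norms on \<open>V\<close>\<close>

lemma enn_powr_ennreal: "0 \<le> x \<Longrightarrow> enn_powr (ennreal x) r = ennreal (x powr r)"
  by (simp add: enn_powr_def)

lemma enn_powr_top [simp]: "enn_powr \<top> r = \<top>"
  by (simp add: enn_powr_def)

lemma enn_powr_mono:
  assumes "0 \<le> r" "x \<le> y"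
  shows "enn_powr x r \<le> enn_powr y r"
proof (cases "y = \<top>")
  case False
  then have "x \<noteq> \<top>" using assms top_unique by auto
  then show ?thesis using False assms
    by (auto simp: enn_powr_def less_top intro!: ennreal_leI powr_mono2 enn2real_mono)
qed simp

lemma enn_powr_mult_ennreal:
  assumes "0 \<le> k" "0 < r"
  shows "enn_powr (ennreal k * x) r = ennreal (k powr r) * enn_powr x r"
proof (cases "x = \<top>")
  case True
  then show ?thesis using assms by (simp add: ennreal_mult_top enn_powr_def)
next
  case False
  then obtain y where "x = ennreal y" "0 \<le> y" by (cases x) auto
  then show ?thesis
    using assms by (simp add: enn_powr_ennreal ennreal_mult[symmetric] powr_mult)
qed

lemma divide_ennreal_eq_times: "0 < c \<Longrightarrow> x / ennreal c = x * ennreal (1 / c)"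
  by (metis divide_ennreal ennreal_1 ennreal_times_divide mult.right_neutral zero_le_one)

lemma Lp_norm_real_finite:
  assumes "p \<noteq> \<top>"
  shows "Lp_norm_real V p h =
    enn_powr (\<integral>\<^sup>+w. ennreal ((indicator V w * \<bar>h w\<bar>) powr enn2real p) \<partial>lborel) (1 / enn2real p)"
proof -
  have "enn_powr (ennreal \<bar>h w\<bar>) (enn2real p) * indicator V w
      = ennreal ((indicator V w * \<bar>h w\<bar>) powr enn2real p)" for w
    by (cases "w \<in> V") (simp_all add: enn_powr_ennreal)
  then show ?thesis using assms by (simp add: Lp_norm_real_def Lp_norm_def)
qed

lemma Lp_norm_mono:
  assumes V: "V \<in> sets borel" and h: "h \<in> borel_measurable borel"
    and le: "\<And>w. w \<in> V \<Longrightarrow> h w \<le> g w"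
  shows "Lp_norm V p h \<le> Lp_norm V p g"
proof (cases "p = \<top>")
  case True
  have "(\<lambda>w. indicator V w * h w) \<in> borel_measurable lborel"
    using V h by measurable
  moreover have "indicator V w * h w \<le> indicator V w * g w" for w
    using le by (cases "w \<in> V") auto
  ultimately show ?thesis
    unfolding Lp_norm_def if_P[OF True] by (rule esssup_mono)
next
  case False
  have "enn_powr (h w) (enn2real p) * indicator V w \<le> enn_powr (g w) (enn2real p) * indicator V w" for w
    using le by (cases "w \<in> V") (auto intro: enn_powr_mono)
  then have "(\<integral>\<^sup>+w\<in>V. enn_powr (h w) (enn2real p) \<partial>lborel) \<le> (\<integral>\<^sup>+w\<in>V. enn_powr (g w) (enn2real p) \<partial>lborel)"
    by (rule nn_integral_mono)
  then show ?thesis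
    unfolding Lp_norm_def if_not_P[OF False] by (rule enn_powr_mono[rotated]) simp
qed

lemma enn2real_ge_one:
  assumes "1 \<le> p" "p \<noteq> \<top>"
  shows "1 \<le> enn2real p"
  using enn2real_mono[of 1 p] assms by (simp add: less_top)

lemma powr_le_weighted_single:
  fixes y A B P :: real
  assumes y: "0 \<le> y" and A: "0 < A" and B: "0 < B" and P: "1 \<le> P"
  shows "y powr P \<le> (A + B) powr (P - 1) * (y powr P * B powr (1 - P))"
proof -
  have "y powr P = B powr (P - 1) * (y powr P * B powr (1 - P))"
    using B by (simp add: powr_add[symmetric])
  also have "\<dots> \<le> (A + B) powr (P - 1) * (y powr P * B powr (1 - P))"
    using A B P by (intro mult_right_mono powr_mono2) auto
  finally show ?thesis .
qed

text \<open>Convexity of \<open>t \<mapsto> t powr P\<close> with weights \<open>A/(A+B)\<close> and \<open>B/(A+B)\<close>; taking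
  for \<open>A\<close>, \<open>B\<close> the two \<open>L\<^sup>P\<close> norms gives Minkowski's inequality.\<close>

lemma powr_add_le_weighted:
  fixes x y A B P :: real
  assumes x: "0 \<le> x" and y: "0 \<le> y" and A: "0 < A" and B: "0 < B" and P: "1 \<le> P"
  shows "(x + y) powr P \<le> (A + B) powr (P - 1) * (x powr P * A powr (1 - P) + y powr P * B powr (1 - P))"
proof (cases "x = 0 \<or> y = 0")
  case True
  then show ?thesis
    using powr_le_weighted_single[OF y A B P] powr_le_weighted_single[OF x B A P] P
    by (auto simp: add.commute)
next
  case False
  then have xp: "0 < x" and yp: "0 < y" using x y by auto
  have AB: "0 < A + B" using A B by simp
  have key: "(A + B) powr P * (z / W) powr P * (W / (A + B)) = (A + B) powr (P - 1) * (z powr P * W powr (1 - P))"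
    if "0 \<le> z" "0 < W" for z W
  proof -
    have "(A + B) powr P * (z / W) powr P * (W / (A + B)) = ((A + B) powr P / (A + B)) * (z powr P * (W / W powr P))"
      using that AB by (simp add: powr_divide field_simps)
    also have "\<dots> = (A + B) powr (P - 1) * (z powr P * W powr (1 - P))"
      using that AB by (simp add: powr_diff powr_one_gt_zero_iff)
    finally show ?thesis .
  qed
  define t where "t = A / (A + B)"
  have t: "0 \<le> t" "t \<le> 1" using A B by (auto simp: t_def)
  have t1: "1 - t = B / (A + B)" using A B by (simp add: t_def field_simps)
  have "(x + y) / (A + B) = t * (x / A) + (1 - t) * (y / B)"
    unfolding t1 using A B by (simp add: t_def add_divide_distrib)
  then have "((x + y) / (A + B)) powr P \<le> t * (x / A) powr P + (1 - t) * (y / B) powr P"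
    using convex_onD[OF powr_convex[OF P] t, of "y / B" "x / A"] xp yp A B by (simp add: algebra_simps)
  then have "(A + B) powr P * ((x + y) / (A + B)) powr P
      \<le> (A + B) powr P * (t * (x / A) powr P + (1 - t) * (y / B) powr P)"
    by (intro mult_left_mono) auto
  also have "(A + B) powr P * ((x + y) / (A + B)) powr P = (x + y) powr P"
    using AB xp yp by (simp add: powr_divide)
  also have "(A + B) powr P * (t * (x / A) powr P + (1 - t) * (y / B) powr P)
      = (A + B) powr P * (x / A) powr P * (A / (A + B)) + (A + B) powr P * (y / B) powr P * (B / (A + B))"
    using AB unfolding t1 by (simp add: t_def algebra_simps)
  also have "\<dots> = (A + B) powr (P - 1) * (x powr P * A powr (1 - P) + y powr P * B powr (1 - P))"
    using key[OF x A] key[OF y B] by (simp add: algebra_simps)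
  finally show ?thesis .
qed

lemma nn_integral_powr_add_null:
  fixes r1 r2 :: "'a \<Rightarrow> real"
  assumes m1: "r1 \<in> borel_measurable M" and n1: "\<And>x. 0 \<le> r1 x"
    and null: "(\<integral>\<^sup>+x. ennreal (r1 x powr P) \<partial>M) = 0"
  shows "(\<integral>\<^sup>+x. ennreal ((r1 x + r2 x) powr P) \<partial>M) = (\<integral>\<^sup>+x. ennreal (r2 x powr P) \<partial>M)"
proof -
  have "AE x in M. ennreal (r1 x powr P) = 0"
    using null m1 by (subst nn_integral_0_iff_AE[symmetric]) auto
  then have "AE x in M. r1 x = 0"
    by eventually_elim (use n1 in auto)
  then show ?thesis
    by (intro nn_integral_cong_AE) (auto elim: eventually_mono)
qed

lemma nn_integral_powr_Minkowski_pos: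
  fixes r1 r2 :: "'a \<Rightarrow> real" and P :: real
  assumes P: "1 \<le> P"
    and m1: "r1 \<in> borel_measurable M" and m2: "r2 \<in> borel_measurable M"
    and n1: "\<And>x. 0 \<le> r1 x" and n2: "\<And>x. 0 \<le> r2 x"
    and a: "(\<integral>\<^sup>+x. ennreal (r1 x powr P) \<partial>M) = ennreal a" "0 < a"
    and b: "(\<integral>\<^sup>+x. ennreal (r2 x powr P) \<partial>M) = ennreal b" "0 < b"
  shows "enn_powr (\<integral>\<^sup>+x. ennreal ((r1 x + r2 x) powr P) \<partial>M) (1/P) \<le> ennreal (a powr (1/P) + b powr (1/P))"
proof -
  define A B where "A = a powr (1/P)" and "B = b powr (1/P)"
  have pw: "(x powr (1 / P)) powr (1 - P) * x = x powr (1 / P)" if "0 < x" for x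
  proof -
    have "(x powr (1 / P)) powr (1 - P) * x = x powr (1 / P * (1 - P) + 1)"
      unfolding powr_powr using that by (simp add: powr_add)
    also have "1 / P * (1 - P) + 1 = 1 / P" using P by (simp add: field_simps)
    finally show ?thesis .
  qed
  have A: "0 < A" "A powr (1 - P) * a = A" and B: "0 < B" "B powr (1 - P) * b = B"
    using a b pw by (simp_all add: A_def B_def)
  define K1 K2 where "K1 = (A + B) powr (P - 1) * A powr (1 - P)" and "K2 = (A + B) powr (P - 1) * B powr (1 - P)"
  have K: "0 \<le> K1" "0 \<le> K2" by (auto simp: K1_def K2_def)
  have "(\<integral>\<^sup>+x. ennreal ((r1 x + r2 x) powr P) \<partial>M)
      \<le> (\<integral>\<^sup>+x. ennreal K1 * ennreal (r1 x powr P) + ennreal K2 * ennreal (r2 x powr P) \<partial>M)"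
  proof (intro nn_integral_mono)
    fix x
    have "(r1 x + r2 x) powr P \<le> K1 * r1 x powr P + K2 * r2 x powr P"
      using powr_add_le_weighted[OF n1 n2 A(1) B(1) P, of x x] by (simp add: K1_def K2_def algebra_simps)
    then show "ennreal ((r1 x + r2 x) powr P) \<le> ennreal K1 * ennreal (r1 x powr P) + ennreal K2 * ennreal (r2 x powr P)"
      using K by (simp add: ennreal_mult'[symmetric] ennreal_plus[symmetric] del: ennreal_plus)
  qed
  also have "\<dots> = ennreal K1 * (\<integral>\<^sup>+x. ennreal (r1 x powr P) \<partial>M) + ennreal K2 * (\<integral>\<^sup>+x. ennreal (r2 x powr P) \<partial>M)"
    using m1 m2 by (simp add: nn_integral_add nn_integral_cmult)
  also have "\<dots> = ennreal (K1 * a + K2 * b)"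
    using a b K by (simp add: ennreal_mult'[symmetric] ennreal_plus[symmetric] del: ennreal_plus)
  also have "K1 * a + K2 * b = (A + B) powr (P - 1) * (A powr (1 - P) * a + B powr (1 - P) * b)"
    by (simp add: K1_def K2_def algebra_simps)
  also have "\<dots> = (A + B) powr P"
    unfolding A(2) B(2) using A B powr_add[of "A + B" "P - 1" 1] by simp
  finally have "enn_powr (\<integral>\<^sup>+x. ennreal ((r1 x + r2 x) powr P) \<partial>M) (1/P) \<le> enn_powr (ennreal ((A + B) powr P)) (1/P)"
    by (rule enn_powr_mono[rotated]) (use P in simp)
  also have "\<dots> = ennreal (A + B)"
    using A B P by (simp add: enn_powr_ennreal powr_powr)
  finally show ?thesis by (simp add: A_def B_def)
qed

lemma nn_integral_powr_Minkowski:
  fixes r1 r2 :: "'a \<Rightarrow> real" and P :: real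
  assumes P: "1 \<le> P"
    and m1: "r1 \<in> borel_measurable M" and m2: "r2 \<in> borel_measurable M"
    and n1: "\<And>x. 0 \<le> r1 x" and n2: "\<And>x. 0 \<le> r2 x"
  shows "enn_powr (\<integral>\<^sup>+x. ennreal ((r1 x + r2 x) powr P) \<partial>M) (1/P)
         \<le> enn_powr (\<integral>\<^sup>+x. ennreal (r1 x powr P) \<partial>M) (1/P) + enn_powr (\<integral>\<^sup>+x. ennreal (r2 x powr P) \<partial>M) (1/P)"
    (is "enn_powr ?I (1/P) \<le> enn_powr ?I1 (1/P) + enn_powr ?I2 (1/P)")
proof (cases "?I1 = \<top> \<or> ?I2 = \<top>")
  case False
  then obtain a b where a: "?I1 = ennreal a" "0 \<le> a" and b: "?I2 = ennreal b" "0 \<le> b"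
    by (metis ennreal_cases)
  have zero: "enn_powr 0 (1/P) = 0" using P by (simp add: enn_powr_def)
  consider "a = 0" | "b = 0" | "0 < a" "0 < b" using a b by linarith
  then show ?thesis
  proof cases
    case 1
    then show ?thesis using nn_integral_powr_add_null[OF m1 n1] a zero by simp
  next
    case 2
    then show ?thesis using nn_integral_powr_add_null[OF m2 n2, of P r1] b zero by (simp add: add.commute)
  next
    case 3
    then show ?thesis
      using nn_integral_powr_Minkowski_pos[OF P m1 m2 n1 n2 a(1) _ b(1)] a b
      by (simp add: enn_powr_ennreal ennreal_plus)
  qed
qed auto

lemma Lp_norm_real_add:
  assumes V: "V \<in> sets borel" and p: "1 \<le> p"
    and a: "a \<in> borel_measurable borel" and b: "b \<in> borel_measurable borel"
  shows "Lp_norm_real V p (\<lambda>w. a w + b w) \<le> Lp_norm_real V p a + Lp_norm_real V p b"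
proof (cases "p = \<top>")
  case True
  define E where "E h = esssup lborel (\<lambda>w. indicator V w * ennreal \<bar>h w\<bar>)" for h :: "real \<Rightarrow> real"
  have tri: "indicator V w * ennreal \<bar>a w + b w\<bar> \<le> indicator V w * ennreal \<bar>a w\<bar> + indicator V w * ennreal \<bar>b w\<bar>" for w
  proof -
    have "ennreal \<bar>a w + b w\<bar> \<le> ennreal (\<bar>a w\<bar> + \<bar>b w\<bar>)"
      by (rule ennreal_leI) (rule abs_triangle_ineq)
    then show ?thesis by (simp add: ennreal_plus split: split_indicator)
  qed
  have "AE w in lborel. indicator V w * ennreal \<bar>a w + b w\<bar> \<le> E a + E b"
    using esssup_AE[of "\<lambda>w. indicator V w * ennreal \<bar>a w\<bar>" lborel]
      esssup_AE[of "\<lambda>w. indicator V w * ennreal \<bar>b w\<bar>" lborel]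
  proof eventually_elim
    case (elim w)
    show ?case using tri[of w] add_mono[OF elim] unfolding E_def by (rule order_trans)
  qed
  moreover have "(\<lambda>w. indicator V w * ennreal \<bar>a w + b w\<bar>) \<in> borel_measurable lborel"
    using V a b by measurable
  ultimately have "E (\<lambda>w. a w + b w) \<le> E a + E b"
    unfolding E_def by (intro esssup_I)
  then show ?thesis
    unfolding Lp_norm_real_def Lp_norm_def if_P[OF True] E_def .
next
  case False
  define P where "P = enn2real p"
  have P: "1 \<le> P" unfolding P_def using p False by (rule enn2real_ge_one)
  have "Lp_norm_real V p (\<lambda>w. a w + b w)
      \<le> enn_powr (\<integral>\<^sup>+w. ennreal ((indicator V w * \<bar>a w\<bar> + indicator V w * \<bar>b w\<bar>) powr P) \<partial>lborel) (1 / P)"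
    unfolding Lp_norm_real_finite[OF False] P_def[symmetric] using P
    by (intro enn_powr_mono nn_integral_mono ennreal_leI powr_mono2)
       (auto simp: abs_triangle_ineq split: split_indicator)
  also have "\<dots> \<le> Lp_norm_real V p a + Lp_norm_real V p b"
    unfolding Lp_norm_real_finite[OF False] P_def[symmetric]
  proof (rule nn_integral_powr_Minkowski[OF P])
    show "(\<lambda>w. indicator V w * \<bar>a w\<bar>) \<in> borel_measurable lborel" using V a by measurable
    show "(\<lambda>w. indicator V w * \<bar>b w\<bar>) \<in> borel_measurable lborel" using V b by measurable
  qed auto
  finally show ?thesis .
qed

lemma Lp_norm_real_divide_le:
  assumes V: "V \<in> sets borel" and p: "1 \<le> p"
    and a: "a \<in> borel_measurable borel" and c: "0 < c"
  shows "Lp_norm_real V p (\<lambda>w. a w / c) \<le> Lp_norm_real V p a / ennreal c"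
proof (cases "p = \<top>")
  case True
  define E where "E = esssup lborel (\<lambda>w. indicator V w * ennreal \<bar>a w\<bar>)"
  have scale: "indicator V w * ennreal \<bar>a w / c\<bar> = indicator V w * ennreal \<bar>a w\<bar> / ennreal c" for w
    using c by (cases "w \<in> V") (simp_all add: divide_ennreal abs_divide)
  have "AE w in lborel. indicator V w * ennreal \<bar>a w / c\<bar> \<le> E / ennreal c"
    using esssup_AE[of "\<lambda>w. indicator V w * ennreal \<bar>a w\<bar>" lborel]
    unfolding E_def by eventually_elim (simp only: scale, erule divide_right_mono_ennreal)
  moreover have "(\<lambda>w. indicator V w * ennreal \<bar>a w / c\<bar>) \<in> borel_measurable lborel"
    using V a by measurable
  ultimately show ?thesis
    unfolding Lp_norm_real_def Lp_norm_def if_P[OF True] E_def by (intro esssup_I)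
next
  case False
  define P where "P = enn2real p"
  have P: "1 \<le> P" unfolding P_def using p False by (rule enn2real_ge_one)
  have "ennreal ((indicator V w * \<bar>a w / c\<bar>) powr P)
      = ennreal ((1 / c) powr P) * ennreal ((indicator V w * \<bar>a w\<bar>) powr P)" for w
  proof -
    have eq: "indicator V w * \<bar>a w / c\<bar> = 1 / c * (indicator V w * \<bar>a w\<bar>)"
      using c by (simp add: abs_divide)
    have "(1 / c * (indicator V w * \<bar>a w\<bar>)) powr P = (1 / c) powr P * (indicator V w * \<bar>a w\<bar>) powr P"
      by (rule powr_mult)
    then show ?thesis unfolding eq by (simp add: ennreal_mult)
  qed
  then have "(\<integral>\<^sup>+w. ennreal ((indicator V w * \<bar>a w / c\<bar>) powr P) \<partial>lborel)
      = (\<integral>\<^sup>+w. ennreal ((1 / c) powr P) * ennreal ((indicator V w * \<bar>a w\<bar>) powr P) \<partial>lborel)"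
    by simp
  also have "\<dots> = ennreal ((1 / c) powr P) * (\<integral>\<^sup>+w. ennreal ((indicator V w * \<bar>a w\<bar>) powr P) \<partial>lborel)"
    by (rule nn_integral_cmult) (use V a in measurable)
  finally show ?thesis
    unfolding Lp_norm_real_finite[OF False] P_def[symmetric]
    using c P by (simp add: enn_powr_mult_ennreal powr_powr divide_ennreal_eq_times mult.commute)
qed

section \<open>Independent sums on finite products of probability spaces\<close>

lemma (in finite_measure) integrable_bounded:
  fixes f :: "'a \<Rightarrow> real"
  assumes "f \<in> borel_measurable M" "\<And>x. \<bar>f x\<bar> \<le> B"
  shows "integrable M f"
  using assms by (intro integrable_const_bound[where B=B]) auto

lemma integral_PiM_component:
  fixes g :: "'a \<Rightarrow> real"
  assumes Q: "\<And>i. i \<in> I \<Longrightarrow> prob_space (Q i)" and i: "i \<in> I"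
    and g: "g \<in> borel_measurable (Q i)"
  shows "(\<integral>x. g (x i) \<partial>PiM I Q) = (\<integral>y. g y \<partial>Q i)"
proof -
  have d: "distr (PiM I Q) (Q i) (\<lambda>x. x i) = Q i" by (rule distr_PiM_component[OF Q i])
  have "(\<integral>x. g (x i) \<partial>PiM I Q) = (\<integral>y. g y \<partial>distr (PiM I Q) (Q i) (\<lambda>x. x i))"
    by (rule integral_distr[OF measurable_component_singleton[of i I Q] g, symmetric]) (rule i)
  then show ?thesis unfolding d .
qed

lemma prod_if_two_points:
  assumes "finite I" "i \<in> I" "j \<in> I" "i \<noteq> j"
  shows "(\<Prod>l\<in>I. if l = i then a else if l = j then b else 1) = (a * b :: 'b::comm_monoid_mult)"
  using assms by (simp add: prod.If_cases Int_absorb1 insert_Diff_if Diff_eq)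

lemma integral_PiM_two_components:
  fixes g h :: "'a \<Rightarrow> real"
  assumes Q: "\<And>i. prob_space (Q i)" and fin: "finite I" and ij: "i \<in> I" "j \<in> I" "i \<noteq> j"
    and g: "integrable (Q i) g" and h: "integrable (Q j) h"
  shows "(\<integral>x. g (x i) * h (x j) \<partial>PiM I Q) = (\<integral>y. g y \<partial>Q i) * (\<integral>y. h y \<partial>Q j)"
proof -
  interpret product_sigma_finite Q
    by (simp add: product_sigma_finite_def prob_space_imp_sigma_finite Q)
  define F where "F l = (if l = i then g else if l = j then h else (\<lambda>_. 1))" for l
  have "(\<Prod>l\<in>I. F l (x l)) = (\<Prod>l\<in>I. if l = i then g (x i) else if l = j then h (x j) else 1)" for x
    by (rule prod.cong) (auto simp: F_def)
  then have "(\<integral>x. g (x i) * h (x j) \<partial>PiM I Q) = (\<integral>x. (\<Prod>l\<in>I. F l (x l)) \<partial>PiM I Q)"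
    by (simp add: prod_if_two_points[OF fin ij])
  also have "\<dots> = (\<Prod>l\<in>I. integral\<^sup>L (Q l) (F l))"
    by (rule product_integral_prod[OF fin])
       (auto simp: F_def g h intro: finite_measure.integrable_const[OF prob_space.axioms(1)[OF Q]])
  also have "\<dots> = (\<Prod>l\<in>I. if l = i then integral\<^sup>L (Q i) g else if l = j then integral\<^sup>L (Q j) h else 1)"
    by (rule prod.cong) (auto simp: F_def prob_space.prob_space[OF Q])
  also have "\<dots> = (\<integral>y. g y \<partial>Q i) * (\<integral>y. h y \<partial>Q j)"
    by (rule prod_if_two_points[OF fin ij])
  finally show ?thesis .
qed

lemma integral_PiM_square_centered_sum:
  fixes Q :: "'i \<Rightarrow> 'a measure" and h :: "'i \<Rightarrow> 'a \<Rightarrow> real"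
  assumes Q: "\<And>i. prob_space (Q i)" and fin: "finite I"
    and h_meas: "\<And>i. i \<in> I \<Longrightarrow> h i \<in> borel_measurable (Q i)"
    and h_bdd: "\<And>i y. i \<in> I \<Longrightarrow> \<bar>h i y\<bar> \<le> B"
    and h_centered: "\<And>i. i \<in> I \<Longrightarrow> (\<integral>y. h i y \<partial>Q i) = 0"
  shows "(\<integral>x. (c + (\<Sum>i\<in>I. h i (x i)))\<^sup>2 \<partial>PiM I Q) = c\<^sup>2 + (\<Sum>i\<in>I. \<integral>y. (h i y)\<^sup>2 \<partial>Q i)"
proof -
  interpret product_prob_space Q I
    by (simp add: product_prob_space_def product_prob_space_axioms_def Q
        product_sigma_finite_def prob_space_imp_sigma_finite)
  have h_int: "integrable (Q i) (h i)" if "i \<in> I" for i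
    using h_meas h_bdd that by (intro finite_measure.integrable_bounded[OF prob_space.axioms(1)[OF Q]])
  have hh_int: "integrable (PiM I Q) (\<lambda>x. h i (x i) * h j (x j))" if "i \<in> I" "j \<in> I" for i j
    by (intro P.integrable_bounded[where B="B * B"])
       (use h_meas h_bdd that in \<open>auto simp: abs_mult intro!: mult_mono'\<close>)
  have comp: "(\<integral>x. g (x i) \<partial>PiM I Q) = (\<integral>y. g y \<partial>Q i)"
    if "i \<in> I" "g \<in> borel_measurable (Q i)" for i and g :: "'a \<Rightarrow> real"
    using Q that by (intro integral_PiM_component)
  have cross: "(\<integral>x. h i (x i) * h j (x j) \<partial>PiM I Q) = (if i = j then \<integral>y. (h i y)\<^sup>2 \<partial>Q i else 0)"
    if "i \<in> I" "j \<in> I" for i j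
  proof (cases "i = j")
    case True
    then show ?thesis
      using comp[OF that(1), of "\<lambda>y. (h i y)\<^sup>2"] h_meas[OF that(1)] by (simp add: power2_eq_square)
  next
    case False
    then show ?thesis
      using integral_PiM_two_components[OF Q fin that False h_int h_int] h_centered that by simp
  qed
  have h_int_PiM: "integrable (PiM I Q) (\<lambda>x. h i (x i))" if "i \<in> I" for i
    by (intro P.integrable_bounded[where B=B]) (use h_meas h_bdd that in auto)
  have "(c + (\<Sum>i\<in>I. h i (x i)))\<^sup>2
      = c\<^sup>2 + (\<Sum>i\<in>I. 2 * c * h i (x i)) + (\<Sum>i\<in>I. \<Sum>j\<in>I. h i (x i) * h j (x j))" for x
    by (simp add: power2_eq_square algebra_simps sum_distrib_left sum_distrib_right sum_product)
  then have "(\<integral>x. (c + (\<Sum>i\<in>I. h i (x i)))\<^sup>2 \<partial>PiM I Q)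
      = c\<^sup>2 + (\<Sum>i\<in>I. 2 * c * (\<integral>x. h i (x i) \<partial>PiM I Q))
          + (\<Sum>i\<in>I. \<Sum>j\<in>I. \<integral>x. h i (x i) * h j (x j) \<partial>PiM I Q)"
    using hh_int h_int_PiM
    by (simp add: integral_add integral_sum Bochner_Integration.integrable_sum P.prob_space)
  also have "\<dots> = c\<^sup>2 + (\<Sum>i\<in>I. \<Sum>j\<in>I. if i = j then \<integral>y. (h i y)\<^sup>2 \<partial>Q i else 0)"
    using cross comp[OF _ h_meas] h_centered by simp
  also have "\<dots> = c\<^sup>2 + (\<Sum>i\<in>I. \<integral>y. (h i y)\<^sup>2 \<partial>Q i)"
    using fin by (simp add: sum.delta)
  finally show ?thesis .
qed

lemma nn_integral_PiM_square_centered_sum: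
  fixes Q :: "'i \<Rightarrow> 'a measure" and h G :: "'i \<Rightarrow> 'a \<Rightarrow> real"
  assumes Q: "\<And>i. prob_space (Q i)" and fin: "finite I"
    and h_meas: "\<And>i. i \<in> I \<Longrightarrow> h i \<in> borel_measurable (Q i)"
    and h_bdd: "\<And>i y. i \<in> I \<Longrightarrow> \<bar>h i y\<bar> \<le> B"
    and h_centered: "\<And>i. i \<in> I \<Longrightarrow> (\<integral>y. h i y \<partial>Q i) = 0"
    and G_meas: "\<And>i. i \<in> I \<Longrightarrow> G i \<in> borel_measurable (Q i)"
    and G_nonneg: "\<And>i y. i \<in> I \<Longrightarrow> 0 \<le> G i y"
    and G_bdd: "\<And>i y. i \<in> I \<Longrightarrow> G i y \<le> B'"
  shows "(\<integral>\<^sup>+x. ennreal ((c + (\<Sum>i\<in>I. h i (x i)))\<^sup>2 + (\<Sum>i\<in>I. G i (x i))) \<partial>PiM I Q)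
    = ennreal (c\<^sup>2 + (\<Sum>i\<in>I. (\<integral>y. (h i y)\<^sup>2 \<partial>Q i) + (\<integral>y. G i y \<partial>Q i)))"
proof -
  interpret product_prob_space Q I
    by (simp add: product_prob_space_def product_prob_space_axioms_def Q
        product_sigma_finite_def prob_space_imp_sigma_finite)
  have comp_meas: "(\<lambda>x. F (x i)) \<in> borel_measurable (PiM I Q)"
    if "i \<in> I" "F \<in> borel_measurable (Q i)" for i and F :: "'a \<Rightarrow> real"
    using measurable_compose[OF measurable_component_singleton[of i I Q] that(2)] that(1) by simp
  have G_int: "integrable (PiM I Q) (\<lambda>x. G i (x i))" if "i \<in> I" for i
    by (intro P.integrable_bounded[where B=B'] comp_meas G_meas that)
       (use G_nonneg G_bdd that in \<open>simp add: abs_of_nonneg\<close>)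
  have "\<bar>c + (\<Sum>i\<in>I. h i (x i))\<bar> \<le> \<bar>c\<bar> + real (card I) * B" for x
  proof -
    have "\<bar>\<Sum>i\<in>I. h i (x i)\<bar> \<le> (\<Sum>i\<in>I. B)"
      by (rule order_trans[OF sum_abs]) (intro sum_mono h_bdd)
    then show ?thesis by simp
  qed
  then have sq_int: "integrable (PiM I Q) (\<lambda>x. (c + (\<Sum>i\<in>I. h i (x i)))\<^sup>2)"
    by (intro P.integrable_bounded[where B="(\<bar>c\<bar> + real (card I) * B)\<^sup>2"]
        borel_measurable_power borel_measurable_add borel_measurable_const borel_measurable_sum
        comp_meas h_meas) (auto simp: abs_le_square_iff[symmetric] intro: order_trans[OF _ abs_ge_self])
  have "(\<integral>\<^sup>+x. ennreal ((c + (\<Sum>i\<in>I. h i (x i)))\<^sup>2 + (\<Sum>i\<in>I. G i (x i))) \<partial>PiM I Q)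
      = ennreal ((\<integral>x. (c + (\<Sum>i\<in>I. h i (x i)))\<^sup>2 \<partial>PiM I Q) + (\<Sum>i\<in>I. \<integral>x. G i (x i) \<partial>PiM I Q))"
    using sq_int G_int G_nonneg
    by (subst nn_integral_eq_integral) (auto intro!: AE_I2 add_nonneg_nonneg sum_nonneg)
  also have "(\<integral>x. (c + (\<Sum>i\<in>I. h i (x i)))\<^sup>2 \<partial>PiM I Q) = c\<^sup>2 + (\<Sum>i\<in>I. \<integral>y. (h i y)\<^sup>2 \<partial>Q i)"
    by (rule integral_PiM_square_centered_sum[OF Q fin]) (use h_meas h_bdd h_centered in auto)
  also have "(\<Sum>i\<in>I. \<integral>x. G i (x i) \<partial>PiM I Q) = (\<Sum>i\<in>I. \<integral>y. G i y \<partial>Q i)"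
    by (intro sum.cong refl integral_PiM_component G_meas) (use Q in auto)
  finally show ?thesis by (simp add: sum.distrib add.assoc)
qed

lemma indicator_PiE_eq_prod:
  assumes "x \<in> extensional I" "finite I"
  shows "indicator (PiE I A) x = (\<Prod>i\<in>I. indicator (A i) (x i) :: ennreal)"
proof (cases "\<forall>i\<in>I. x i \<in> A i")
  case True
  then have "x \<in> PiE I A" using assms by (auto simp: PiE_def)
  then show ?thesis using True by simp
next
  case False
  then obtain i where "i \<in> I" "x i \<notin> A i" by blast
  then have "x \<notin> PiE I A" by auto
  then show ?thesis using \<open>i \<in> I\<close> \<open>x i \<notin> A i\<close> assms
    by (simp add: prod_zero_iff) (metis indicator_simps(2))
qed

lemma nn_integral_PiM_prod_density:
  fixes M :: "'i \<Rightarrow> 'a measure" and d :: "'i \<Rightarrow> 'a \<Rightarrow> ennreal"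
  assumes fin: "finite I" and sf: "\<And>i. sigma_finite_measure (M i)"
    and dm: "\<And>i. d i \<in> borel_measurable (M i)"
    and sfd: "\<And>i. sigma_finite_measure (density (M i) (d i))"
    and Gm: "G \<in> borel_measurable (PiM I M)"
  shows "(\<integral>\<^sup>+x. G x * (\<Prod>i\<in>I. d i (x i)) \<partial>PiM I M) = (\<integral>\<^sup>+x. G x \<partial>PiM I (\<lambda>i. density (M i) (d i)))"
proof -
  interpret PM: product_sigma_finite M by (simp add: product_sigma_finite_def sf)
  interpret PD: product_sigma_finite "\<lambda>i. density (M i) (d i)" by (simp add: product_sigma_finite_def sfd)
  have Dm: "(\<lambda>x. \<Prod>i\<in>I. d i (x i)) \<in> borel_measurable (PiM I M)"
    using dm by measurable
  have setsD: "sets (PiM I (\<lambda>i. density (M i) (d i))) = sets (PiM I M)"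
    by (rule sets_PiM_cong) auto
  have eq: "density (PiM I M) (\<lambda>x. \<Prod>i\<in>I. d i (x i)) = PiM I (\<lambda>i. density (M i) (d i))"
  proof (rule PD.PiM_eqI[OF fin])
    show "sets (density (PiM I M) (\<lambda>x. \<Prod>i\<in>I. d i (x i))) = sets (PiM I (\<lambda>i. density (M i) (d i)))"
      using setsD by simp
  next
    fix A assume A: "\<And>i. i \<in> I \<Longrightarrow> A i \<in> sets (density (M i) (d i))"
    then have A': "\<And>i. i \<in> I \<Longrightarrow> A i \<in> sets (M i)" by simp
    have PA: "PiE I A \<in> sets (PiM I M)" using A' fin by (auto intro: sets_PiM_I_finite)
    have "emeasure (density (PiM I M) (\<lambda>x. \<Prod>i\<in>I. d i (x i))) (PiE I A)
        = (\<integral>\<^sup>+x. (\<Prod>i\<in>I. d i (x i)) * indicator (PiE I A) x \<partial>PiM I M)"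
      by (rule emeasure_density[OF Dm PA])
    also have "\<dots> = (\<integral>\<^sup>+x. (\<Prod>i\<in>I. d i (x i) * indicator (A i) (x i)) \<partial>PiM I M)"
      by (intro nn_integral_cong) (simp add: indicator_PiE_eq_prod[OF _ fin] space_PiM PiE_iff prod.distrib)
    also have "\<dots> = (\<Prod>i\<in>I. \<integral>\<^sup>+y. d i y * indicator (A i) y \<partial>M i)"
      by (rule PM.product_nn_integral_prod[OF fin]) (use dm A' in measurable)
    also have "\<dots> = (\<Prod>i\<in>I. emeasure (density (M i) (d i)) (A i))"
      by (intro prod.cong refl emeasure_density[symmetric]) (use dm A' in auto)
    finally show "emeasure (density (PiM I M) (\<lambda>x. \<Prod>i\<in>I. d i (x i))) (PiE I A) = (\<Prod>i\<in>I. emeasure (density (M i) (d i)) (A i))" .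
  qed
  show ?thesis
    by (simp add: eq[symmetric] nn_integral_density[OF Dm Gm] mult.commute)
qed

section \<open>Smoothed densities and their particle laws\<close>

lemma measurable_case_prod_apply:
  assumes f: "case_prod f \<in> borel_measurable (borel \<Otimes>\<^sub>M borel)"
    and g: "g \<in> measurable N borel" and h: "h \<in> borel_measurable N"
  shows "(\<lambda>x. f (g x) (h x)) \<in> borel_measurable N"
  using measurable_compose[OF measurable_Pair[OF g h] f] by simp

lemma measurable_Ez:
  assumes P: "prob_space P" and sets_P: "sets P = sets borel"
    and F: "case_prod F \<in> borel_measurable (N \<Otimes>\<^sub>M borel)"
  shows "(\<lambda>x. Ez P (F x)) \<in> borel_measurable N"
proof -
  interpret prob_space P by (fact P)
  have "case_prod F \<in> borel_measurable (N \<Otimes>\<^sub>M P)"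
    using F by (simp add: measurable_cong_sets[OF sets_pair_measure_cong[OF refl sets_P] refl])
  then show ?thesis unfolding Ez_def by (rule borel_measurable_lebesgue_integral)
qed

locale smoothed_density_family =
  fixes P :: "'z::topological_space measure" and V :: "real set"
    and S :: "real \<Rightarrow> real" and B :: real and f :: "'z \<Rightarrow> real \<Rightarrow> real"
  assumes prob_space_P: "prob_space P" and sets_P: "sets P = sets borel"
    and V_sets: "V \<in> sets borel"
    and f_meas: "case_prod f \<in> borel_measurable (borel \<Otimes>\<^sub>M borel)"
    and f_nonneg: "\<And>z v. v \<in> V \<Longrightarrow> 0 \<le> f z v"
    and f_density: "\<And>z. set_integrable lborel V (f z) \<and> (\<integral>v\<in>V. f z v \<partial>lborel) = 1"
    and S_meas: "S \<in> borel_measurable borel"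
    and S_nonneg: "\<And>x. 0 \<le> S x" and S_le: "\<And>x. S x \<le> B"
begin

lemmas f_apply_measurable [measurable] = measurable_case_prod_apply[OF f_meas]
lemmas Ez_measurable [measurable] = measurable_Ez[OF prob_space_P sets_P]

lemma B_nonneg: "0 \<le> B"
  using S_nonneg[of 0] S_le[of 0] by linarith

lemma borel_measurable_P: "borel_measurable P = borel_measurable borel"
  by (rule measurable_cong_sets[OF sets_P refl])

lemma measurable_smooth [measurable]:
  assumes a: "a \<in> borel_measurable N" and b: "b \<in> measurable N borel"
  shows "(\<lambda>x. smooth V S f (a x) (b x)) \<in> borel_measurable N"
proof -
  note [measurable] = a b S_meas V_sets
  have "(\<lambda>(x, v). indicator V v *\<^sub>R (S (a x - v) * f (b x) v)) \<in> borel_measurable (N \<Otimes>\<^sub>M lborel)"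
    by (simp add: measurable_cong_sets[OF sets_pair_measure_cong[OF refl sets_lborel] refl])
  then show ?thesis
    unfolding smooth_def set_lebesgue_integral_def
    by (rule lborel.borel_measurable_lebesgue_integral)
qed

lemma measurable_sigmaS2 [measurable]:
  assumes a: "a \<in> borel_measurable N" and b: "b \<in> measurable N borel"
  shows "(\<lambda>x. sigmaS2 V S f (a x) (b x)) \<in> borel_measurable N"
proof -
  note [measurable] = a b S_meas V_sets
  have "(\<lambda>(x, v). indicator V v *\<^sub>R ((S (a x - v) - smooth V S f (a x) (b x))\<^sup>2 * f (b x) v))
      \<in> borel_measurable (N \<Otimes>\<^sub>M lborel)"
    by (simp add: measurable_cong_sets[OF sets_pair_measure_cong[OF refl sets_lborel] refl])
  then show ?thesis
    unfolding sigmaS2_def set_lebesgue_integral_def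
    by (rule lborel.borel_measurable_lebesgue_integral)
qed

definition particle_law :: "'z \<Rightarrow> real measure" where
  "particle_law z = density lborel (\<lambda>v. ennreal (indicator V v * f z v))"

lemma borel_measurable_particle_law [simp]:
  "borel_measurable (particle_law z) = borel_measurable borel"
  unfolding particle_law_def by (rule measurable_cong_sets) simp_all

lemma prob_space_particle_law: "prob_space (particle_law z)"
proof -
  have "integrable lborel (\<lambda>v. indicator V v * f z v)"
    using f_density by (simp add: set_integrable_def)
  then have "emeasure (particle_law z) UNIV = ennreal (\<integral>v. indicator V v * f z v \<partial>lborel)"
    unfolding particle_law_def using V_sets f_nonneg
    by (subst emeasure_density) (auto intro!: nn_integral_eq_integral split: split_indicator)
  also have "(\<integral>v. indicator V v * f z v \<partial>lborel) = 1"
    using f_density by (simp add: set_lebesgue_integral_def)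
  finally show ?thesis by (intro prob_spaceI) (simp add: particle_law_def)
qed

lemma integral_particle_law:
  assumes "\<phi> \<in> borel_measurable borel"
  shows "(\<integral>v. \<phi> v \<partial>particle_law z) = (\<integral>v\<in>V. f z v * \<phi> v \<partial>lborel)"
  unfolding particle_law_def set_lebesgue_integral_def
  using assms V_sets f_nonneg
  by (subst integral_density) (auto simp: mult.assoc split: split_indicator)

lemma smooth_eq_integral: "smooth V S f w z = (\<integral>v. S (w - v) \<partial>particle_law z)"
  using S_meas by (simp add: integral_particle_law smooth_def mult.commute)

lemma sigmaS2_eq_integral:
  "sigmaS2 V S f w z = (\<integral>v. (S (w - v) - smooth V S f w z)\<^sup>2 \<partial>particle_law z)"
  using S_meas by (simp add: integral_particle_law sigmaS2_def mult.commute)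

lemma smooth_nonneg: "0 \<le> smooth V S f w z"
  unfolding smooth_eq_integral by (simp add: S_nonneg)

lemma smooth_le: "smooth V S f w z \<le> B"
proof -
  interpret prob_space "particle_law z" by (rule prob_space_particle_law)
  have "integrable (particle_law z) (\<lambda>v. S (w - v))"
    using S_meas S_nonneg S_le by (intro integrable_bounded[where B=B]) auto
  then show ?thesis
    unfolding smooth_eq_integral by (rule integral_le_const) (simp add: S_le)
qed

lemma abs_smooth_le: "\<bar>smooth V S f w z\<bar> \<le> B"
  using smooth_nonneg smooth_le by simp

lemma sigmaS2_nonneg: "0 \<le> sigmaS2 V S f w z"
  unfolding sigmaS2_eq_integral by simp

lemma sigmaS2_le: "sigmaS2 V S f w z \<le> B\<^sup>2"
proof -
  interpret prob_space "particle_law z" by (rule prob_space_particle_law)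
  have "(S (w - v) - smooth V S f w z)\<^sup>2 \<le> B\<^sup>2" for v
    using S_nonneg[of "w - v"] S_le[of "w - v"] smooth_nonneg[of w z] smooth_le[of w z] B_nonneg
    by (simp add: abs_le_square_iff[symmetric] abs_le_iff)
  moreover have "integrable (particle_law z) (\<lambda>v. (S (w - v) - smooth V S f w z)\<^sup>2)"
    using S_meas calculation by (intro integrable_bounded[where B="B\<^sup>2"]) auto
  ultimately show ?thesis
    unfolding sigmaS2_eq_integral[of w z] by (intro integral_le_const) auto
qed

lemma nn_integral_particles_square:
  fixes zs :: "'i \<Rightarrow> 'z" and h :: "'z \<Rightarrow> real \<Rightarrow> real"
  assumes fin: "finite I"
    and h_meas: "\<And>z. h z \<in> borel_measurable borel" and h_bdd: "\<And>z v. \<bar>h z v\<bar> \<le> K"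
    and h_centered: "\<And>z. (\<integral>v. h z v \<partial>particle_law z) = 0"
  shows "(\<integral>\<^sup>+ws. ennreal ((c + (\<Sum>i\<in>I. h (zs i) (ws i)))\<^sup>2) *
            (\<Prod>i\<in>I. ennreal (indicator V (ws i) * f (zs i) (ws i))) \<partial>PiM I (\<lambda>_. lborel))
    = ennreal (c\<^sup>2 + (\<Sum>i\<in>I. \<integral>v. (h (zs i) v)\<^sup>2 \<partial>particle_law (zs i)))"
proof -
  have K: "0 \<le> K" using h_bdd[of undefined 0] by linarith
  note [measurable] = h_meas V_sets
  have "(\<integral>\<^sup>+ws. ennreal ((c + (\<Sum>i\<in>I. h (zs i) (ws i)))\<^sup>2) *
            (\<Prod>i\<in>I. ennreal (indicator V (ws i) * f (zs i) (ws i))) \<partial>PiM I (\<lambda>_. lborel))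
      = (\<integral>\<^sup>+ws. ennreal ((c + (\<Sum>i\<in>I. h (zs i) (ws i)))\<^sup>2 + (\<Sum>i\<in>I. 0)) \<partial>PiM I (\<lambda>i. particle_law (zs i)))"
    unfolding particle_law_def
  proof (simp, rule nn_integral_PiM_prod_density[OF fin])
    show "sigma_finite_measure (density lborel (\<lambda>v. ennreal (indicator V v * f (zs i) v)))" for i
      using prob_space_particle_law[of "zs i"]
      by (simp add: particle_law_def prob_space_imp_sigma_finite)
  qed (auto intro: lborel.sigma_finite_measure_axioms)
  also have "\<dots> = ennreal (c\<^sup>2 + (\<Sum>i\<in>I. (\<integral>v. (h (zs i) v)\<^sup>2 \<partial>particle_law (zs i)) + (\<integral>v. 0 \<partial>particle_law (zs i))))"
    by (rule nn_integral_PiM_square_centered_sum[OF prob_space_particle_law fin])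
       (use h_bdd h_centered K in auto)
  finally show ?thesis by simp
qed

lemma abs_kernel_error_le: "\<bar>smooth V S f w z - S (w - v)\<bar> \<le> B"
  using smooth_nonneg[of w z] smooth_le[of w z] S_nonneg[of "w - v"] S_le[of "w - v"]
  by (simp add: abs_le_iff)

lemma integral_kernel_error: "(\<integral>v. smooth V S f w z - S (w - v) \<partial>particle_law z) = 0"
proof -
  interpret prob_space "particle_law z" by (rule prob_space_particle_law)
  have "integrable (particle_law z) (\<lambda>v. S (w - v))"
    using S_meas S_nonneg S_le by (intro integrable_bounded[where B=B]) auto
  then show ?thesis
    unfolding smooth_eq_integral by (simp add: prob_space)
qed

lemma integral_kernel_error_sq:
  "(\<integral>v. (smooth V S f w z - S (w - v))\<^sup>2 \<partial>particle_law z) = sigmaS2 V S f w z"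
  unfolding sigmaS2_eq_integral by (simp add: power2_commute)

lemma nn_integral_particle_noise:
  assumes M: "1 \<le> M" and N: "1 \<le> N"
  shows "(\<integral>\<^sup>+ws. ennreal ((a + (\<Sum>ki\<in>{..<M} \<times> {..<N}.
              (smooth V S f w (zs (fst ki)) - S (w - ws ki)) / (real M * real N)))\<^sup>2) *
          (\<Prod>ki\<in>{..<M} \<times> {..<N}. ennreal (indicator V (ws ki) * f (zs (fst ki)) (ws ki)))
        \<partial>PiM ({..<M} \<times> {..<N}) (\<lambda>_. lborel))
    = ennreal (a\<^sup>2 + (\<Sum>k<M. sigmaS2 V S f w (zs k) / (real M * (real M * real N))))"
proof -
  define h where "h z v = (smooth V S f w z - S (w - v)) / (real M * real N)" for z v
  have MN: "1 \<le> real M * real N" using mult_mono[of 1 "real M" 1 "real N"] M N by simp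
  have h_meas: "h z \<in> borel_measurable borel" for z
    unfolding h_def using S_meas by measurable
  have h_bdd: "\<bar>h z v\<bar> \<le> B" for z v
    using abs_kernel_error_le[of w z v] mult_left_mono[OF MN B_nonneg] MN
    unfolding h_def abs_divide by (simp add: divide_le_eq)
  have h_centered: "(\<integral>v. h z v \<partial>particle_law z) = 0" for z
    unfolding h_def using integral_kernel_error[where w=w and z=z] by simp
  have "(\<Sum>ki\<in>{..<M} \<times> {..<N}. \<integral>v. (h (zs (fst ki)) v)\<^sup>2 \<partial>particle_law (zs (fst ki)))
      = (\<Sum>k<M. \<Sum>i<N. sigmaS2 V S f w (zs k) / (real M * real N)\<^sup>2)"
    unfolding sum.cartesian_product h_def power_divide integral_divide_zero integral_kernel_error_sq
    by (rule sum.cong) auto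
  also have "\<dots> = (\<Sum>k<M. sigmaS2 V S f w (zs k) / (real M * (real M * real N)))"
    using N by (simp add: power2_eq_square)
  finally show ?thesis
    using nn_integral_particles_square[OF _ h_meas h_bdd h_centered, where I="{..<M} \<times> {..<N}" and zs="\<lambda>ki. zs (fst ki)" and c=a]
    unfolding h_def by simp
qed

end

section \<open>The control-variate estimator\<close>

lemma cv_estimator_error_decomp:
  fixes M N :: nat
  assumes M: "1 \<le> M" and N: "1 \<le> N"
  shows "c - cv_estimator P V S f ft M N w zs ws =
    (c - Ez P (smooth V S f w))
    + (\<Sum>k<M. ((Ez P (smooth V S f w) - lambda_opt P V S f ft w * Ez P (smooth V S ft w))
                - (smooth V S f w (zs k) - lambda_opt P V S f ft w * smooth V S ft w (zs k))) / real M)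
    + (\<Sum>ki\<in>{..<M} \<times> {..<N}. (smooth V S f w (zs (fst ki)) - S (w - ws ki)) / (real M * real N))"
proof -
  define sf where "sf = smooth V S f w"
  define st where "st = smooth V S ft w"
  define lam where "lam = lambda_opt P V S f ft w"
  have Mp: "0 < real M" and Np: "0 < real N" using M N by auto
  have "(\<Sum>ki\<in>{..<M} \<times> {..<N}. (sf (zs (fst ki)) - S (w - ws ki)) / (real M * real N))
      = (\<Sum>k<M. \<Sum>i<N. (sf (zs k) - S (w - ws (k, i))) / (real M * real N))"
    by (simp add: sum.cartesian_product split_beta)
  also have "\<dots> = (\<Sum>k<M. sf (zs k) / real M - kde S N ws k w / real M)"
  proof (intro sum.cong refl)
    fix k
    have "(\<Sum>i<N. (sf (zs k) - S (w - ws (k, i))) / (real M * real N))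
        = (real N * sf (zs k) - (\<Sum>i<N. S (w - ws (k, i)))) / (real M * real N)"
      by (simp add: sum_divide_distrib[symmetric] sum_subtractf)
    also have "\<dots> = sf (zs k) / real M - kde S N ws k w / real M"
      using Mp Np by (simp add: kde_def field_simps)
    finally show "(\<Sum>i<N. (sf (zs k) - S (w - ws (k, i))) / (real M * real N))
        = sf (zs k) / real M - kde S N ws k w / real M" .
  qed
  finally have particles: "(\<Sum>ki\<in>{..<M} \<times> {..<N}. (sf (zs (fst ki)) - S (w - ws ki)) / (real M * real N))
      = (\<Sum>k<M. sf (zs k)) / real M - (\<Sum>k<M. kde S N ws k w) / real M"
    by (simp add: sum_subtractf sum_divide_distrib)
  have samples: "(\<Sum>k<M. ((Ez P sf - lam * Ez P st) - (sf (zs k) - lam * st (zs k))) / real M)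
      = (Ez P sf - lam * Ez P st) - (\<Sum>k<M. sf (zs k)) / real M + lam * ((\<Sum>k<M. st (zs k)) / real M)"
    using Mp by (simp add: sum_divide_distrib[symmetric] sum_subtractf sum.distrib sum_distrib_left field_simps)
  show ?thesis
    unfolding sf_def[symmetric] st_def[symmetric] lam_def[symmetric] particles samples
    by (simp add: cv_estimator_def sf_def st_def lam_def algebra_simps)
qed

lemma Varz_control_variate:
  fixes X Y :: "'z \<Rightarrow> real"
  assumes P: "prob_space P" and X: "X \<in> borel_measurable P" and Y: "Y \<in> borel_measurable P"
    and X_bdd: "\<And>z. \<bar>X z\<bar> \<le> K" and Y_bdd: "\<And>z. \<bar>Y z\<bar> \<le> K"
    and VY: "Varz P Y > 0" and VX: "Varz P X > 0"
  shows "Varz P (\<lambda>z. X z - (Covz P X Y / Varz P Y) * Y z) = (1 - (Corrz P X Y)\<^sup>2) * Varz P X"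
proof -
  interpret prob_space P by (fact P)
  define mx my C vx vy where "mx = Ez P X" and "my = Ez P Y" and "C = Covz P X Y"
    and "vx = Varz P X" and "vy = Varz P Y"
  define lam where "lam = C / vy"
  define R where "R = K + \<bar>mx\<bar> + \<bar>my\<bar>"
  have bnd: "\<bar>X z - mx\<bar> \<le> R" "\<bar>Y z - my\<bar> \<le> R" for z
    using X_bdd[of z] Y_bdd[of z] unfolding R_def by linarith+
  have "integrable P X" "integrable P Y"
    using X Y X_bdd Y_bdd by (auto intro: integrable_bounded)
  then have mean: "Ez P (\<lambda>z. X z - lam * Y z) = mx - lam * my"
    unfolding Ez_def mx_def my_def by simp
  have sq_int: "integrable P (\<lambda>z. (X z - mx)\<^sup>2)" "integrable P (\<lambda>z. (Y z - my)\<^sup>2)"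
    and cross_int: "integrable P (\<lambda>z. (X z - mx) * (Y z - my))"
  proof -
    have "(X z - mx)\<^sup>2 \<le> R\<^sup>2" "(Y z - my)\<^sup>2 \<le> R\<^sup>2" "\<bar>(X z - mx) * (Y z - my)\<bar> \<le> R\<^sup>2" for z
      using power_mono[OF bnd(1)[of z] abs_ge_zero, of 2] power_mono[OF bnd(2)[of z] abs_ge_zero, of 2] bnd[of z]
      by (simp_all add: abs_mult power2_eq_square mult_mono')
    then show "integrable P (\<lambda>z. (X z - mx)\<^sup>2)" "integrable P (\<lambda>z. (Y z - my)\<^sup>2)"
      "integrable P (\<lambda>z. (X z - mx) * (Y z - my))"
      using X Y by (auto intro!: integrable_bounded[where B="R\<^sup>2"])
  qed
  have "Varz P (\<lambda>z. X z - lam * Y z)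
      = (\<integral>z. (X z - mx)\<^sup>2 - 2 * lam * ((X z - mx) * (Y z - my)) + lam\<^sup>2 * (Y z - my)\<^sup>2 \<partial>P)"
    unfolding Varz_def mean unfolding Ez_def
    by (intro Bochner_Integration.integral_cong refl) (simp add: power2_eq_square algebra_simps)
  also have "\<dots> = vx - 2 * lam * C + lam\<^sup>2 * vy"
    using sq_int cross_int
    by (simp add: vx_def vy_def C_def Varz_def Covz_def mx_def my_def Ez_def)
  also have "\<dots> = vx - C\<^sup>2 / vy"
    using VY by (simp add: lam_def vy_def power2_eq_square field_simps)
  also have "\<dots> = (1 - (Corrz P X Y)\<^sup>2) * vx"
    using VX VY by (simp add: Corrz_def C_def vx_def vy_def power_divide power_mult_distrib field_simps)
  finally show ?thesis by (simp add: lam_def C_def vy_def vx_def)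
qed

locale control_variate_setting =
  f: smoothed_density_family P V S B f + ft: smoothed_density_family P V S B ft
  for P :: "'z::topological_space measure" and V S B f ft
begin

definition cv_mse :: "nat \<Rightarrow> nat \<Rightarrow> real \<Rightarrow> real \<Rightarrow> real" where
  "cv_mse M N c w =
     (c - Ez P (smooth V S f w))\<^sup>2
     + Varz P (\<lambda>z. smooth V S f w z - lambda_opt P V S f ft w * smooth V S ft w z) / real M
     + Ez P (sigmaS2 V S f w) / (real M * real N)"

lemma cv_mse_nonneg: "0 \<le> cv_mse M N c w"
  unfolding cv_mse_def Varz_def Ez_def
  by (intro add_nonneg_nonneg divide_nonneg_nonneg Bochner_Integration.integral_nonneg)
     (auto simp: f.sigmaS2_nonneg)

lemma measurable_cv_mse [measurable]:
  assumes [measurable]: "c \<in> borel_measurable borel"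
  shows "(\<lambda>w. cv_mse M N (c w) w) \<in> borel_measurable borel"
  unfolding cv_mse_def Varz_def lambda_opt_def Covz_def by measurable

lemma smooth_measurable_P:
  "smooth V S f w \<in> borel_measurable P" "smooth V S ft w \<in> borel_measurable P"
  "sigmaS2 V S f w \<in> borel_measurable P"
  using f.measurable_smooth[of "\<lambda>_. w" borel "\<lambda>z. z"] ft.measurable_smooth[of "\<lambda>_. w" borel "\<lambda>z. z"]
    f.measurable_sigmaS2[of "\<lambda>_. w" borel "\<lambda>z. z"]
  by (simp_all add: f.borel_measurable_P)

lemma EEV_eq_cv_mse:
  assumes M: "1 \<le> M" and N: "1 \<le> N"
  shows "EEV P V f M N (\<lambda>zs ws. (c - cv_estimator P V S f ft M N w zs ws)\<^sup>2) = ennreal (cv_mse M N c w)"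
proof -
  interpret P: prob_space P by (rule f.prob_space_P)
  define sf st sg lam where "sf = smooth V S f w" and "st = smooth V S ft w"
    and "sg = sigmaS2 V S f w" and "lam = lambda_opt P V S f ft w"
  define U where "U = (\<lambda>z. sf z - lam * st z)"
  define g where "g z = (Ez P U - U z) / real M" for z
  define G where "G z = sg z / (real M * (real M * real N))" for z
  have [measurable]: "sf \<in> borel_measurable P" "st \<in> borel_measurable P" "sg \<in> borel_measurable P"
    unfolding sf_def st_def sg_def by (fact smooth_measurable_P)+
  have U_bdd: "\<bar>U z\<bar> \<le> B + \<bar>lam\<bar> * B" for z
    using f.abs_smooth_le[of w z] mult_left_mono[OF ft.abs_smooth_le[of w z] abs_ge_zero[of lam]]
      abs_triangle_ineq4[of "sf z" "lam * st z"]
    unfolding U_def sf_def st_def by (simp add: abs_mult)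
  have "U \<in> borel_measurable P" unfolding U_def by measurable
  then have "integrable P U" using U_bdd by (rule P.integrable_bounded)
  then have g_centered: "(\<integral>z. g z \<partial>P) = 0"
    unfolding g_def Ez_def by (simp add: P.prob_space)
  have g_bdd: "\<bar>g z\<bar> \<le> \<bar>Ez P U\<bar> + B + \<bar>lam\<bar> * B" for z
  proof -
    have "\<bar>g z\<bar> \<le> \<bar>Ez P U - U z\<bar>"
      unfolding g_def abs_divide using M by (simp add: divide_le_eq mult_le_cancel_left1)
    then show ?thesis using U_bdd[of z] by linarith
  qed
  have "integrable P sf" "integrable P st"
    unfolding sf_def st_def
    using P.integrable_bounded[OF smooth_measurable_P(1) f.abs_smooth_le]
      P.integrable_bounded[OF smooth_measurable_P(2) ft.abs_smooth_le] .
  then have "Ez P U = Ez P sf - lam * Ez P st"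
    unfolding Ez_def U_def by simp
  then have decomp: "c - cv_estimator P V S f ft M N w zs ws = (c - Ez P sf + (\<Sum>k<M. g (zs k)))
      + (\<Sum>ki\<in>{..<M} \<times> {..<N}. (sf (zs (fst ki)) - S (w - ws ki)) / (real M * real N))" for zs ws
    unfolding g_def cv_estimator_error_decomp[OF M N] U_def sf_def st_def lam_def
    by (simp add: diff_divide_distrib)
  have G_bdd: "G z \<le> B\<^sup>2" for z
  proof -
    have "1 \<le> real M * (real M * real N)"
      using mult_mono[of 1 "real M" 1 "real M * real N"] mult_mono[of 1 "real M" 1 "real N"] M N by simp
    then have "G z \<le> sg z"
      unfolding G_def sg_def using f.sigmaS2_nonneg[of w z]
      by (simp add: divide_le_eq mult_le_cancel_left1)
    then show ?thesis unfolding sg_def using f.sigmaS2_le[of w z] by linarith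
  qed
  have g_meas: "g \<in> borel_measurable P" unfolding g_def U_def by measurable
  have G_meas: "G \<in> borel_measurable P" unfolding G_def by measurable
  have G_nonneg: "0 \<le> G z" for z
    unfolding G_def sg_def by (simp add: f.sigmaS2_nonneg)
  \<comment> \<open>integrating out the particles first leaves a sum over the parameter samples only\<close>
  have "EEV P V f M N (\<lambda>zs ws. (c - cv_estimator P V S f ft M N w zs ws)\<^sup>2)
      = (\<integral>\<^sup>+zs. ennreal ((c - Ez P sf + (\<Sum>k<M. g (zs k)))\<^sup>2 + (\<Sum>k<M. G (zs k))) \<partial>PiM {..<M} (\<lambda>_. P))"
    unfolding EEV_def decomp sf_def f.nn_integral_particle_noise[OF M N] G_def sg_def ..
  also have "\<dots> = ennreal ((c - Ez P sf)\<^sup>2 + (\<Sum>k<M. (\<integral>z. (g z)\<^sup>2 \<partial>P) + (\<integral>z. G z \<partial>P)))"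
    by (rule nn_integral_PiM_square_centered_sum[OF f.prob_space_P])
       (use g_meas g_bdd g_centered G_meas G_nonneg G_bdd in auto)
  also have "\<dots> = ennreal ((c - Ez P sf)\<^sup>2 + real M * (Varz P U / (real M)\<^sup>2 + Ez P sg / (real M * (real M * real N))))"
    by (simp add: g_def G_def Varz_def Ez_def power_divide power2_commute)
  also have "\<dots> = ennreal (cv_mse M N c w)"
  proof -
    have "cv_mse M N c w = (c - Ez P sf)\<^sup>2 + (Varz P U / real M + Ez P sg / (real M * real N))"
      unfolding cv_mse_def sf_def sg_def U_def st_def lam_def by simp
    moreover have "real M * (Varz P U / (real M)\<^sup>2 + Ez P sg / (real M * (real M * real N)))
        = Varz P U / real M + Ez P sg / (real M * real N)"
      using M N by (simp add: power2_eq_square field_simps)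
    ultimately show ?thesis by simp
  qed
  finally show ?thesis .
qed

lemma sqrt_cv_mse_le:
  assumes M: "1 \<le> M" and N: "1 \<le> N"
    and var_ft: "Varz P (smooth V S ft w) > 0" and var_f: "Varz P (smooth V S f w) > 0"
  shows "sqrt (cv_mse M N c w) \<le> \<bar>c - Ez P (smooth V S f w)\<bar>
      + sqrt (1 - (Corrz P (smooth V S f w) (smooth V S ft w))\<^sup>2) * sqrt (Varz P (smooth V S f w)) / sqrt (real M)
      + sqrt (Ez P (sigmaS2 V S f w)) / sqrt (real N)"
proof -
  define VU Es where "VU = Varz P (\<lambda>z. smooth V S f w z - lambda_opt P V S f ft w * smooth V S ft w z)"
    and "Es = Ez P (sigmaS2 V S f w)"
  have VU: "VU = (1 - (Corrz P (smooth V S f w) (smooth V S ft w))\<^sup>2) * Varz P (smooth V S f w)"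
    unfolding VU_def lambda_opt_def
    by (rule Varz_control_variate[OF f.prob_space_P smooth_measurable_P(1,2)
          f.abs_smooth_le ft.abs_smooth_le var_ft var_f])
  have "0 \<le> VU" "0 \<le> Es"
    unfolding VU_def Es_def Varz_def Ez_def by (auto intro!: Bochner_Integration.integral_nonneg f.sigmaS2_nonneg)
  moreover have "Es / (real M * real N) \<le> Es / real N"
    using M N \<open>0 \<le> Es\<close> by (intro divide_left_mono) (auto intro: mult_right_mono[of 1 "real M", simplified])
  ultimately have "sqrt (cv_mse M N c w) \<le> sqrt ((c - Ez P (smooth V S f w))\<^sup>2) + sqrt (VU / real M) + sqrt (Es / real N)"
    unfolding cv_mse_def VU_def[symmetric] Es_def[symmetric]
    by (intro order_trans[OF sqrt_add_le_add_sqrt] add_mono order_trans[OF sqrt_add_le_add_sqrt]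
        real_sqrt_le_mono order_refl) auto
  then show ?thesis
    unfolding VU Es_def by (simp add: real_sqrt_mult real_sqrt_divide)
qed


lemma Lp_norm_rmse_le:
  assumes p: "1 \<le> p" and M: "1 \<le> M" and N: "1 \<le> N" and c: "c \<in> borel_measurable borel"
    and var_ft: "\<And>w. w \<in> V \<Longrightarrow> Varz P (smooth V S ft w) > 0"
    and var_f: "\<And>w. w \<in> V \<Longrightarrow> Varz P (smooth V S f w) > 0"
  shows "Lp_norm V p (\<lambda>w. enn_powr (EEV P V f M N (\<lambda>zs ws.
              (c w - cv_estimator P V S f ft M N w zs ws)\<^sup>2)) (1/2))
    \<le> Lp_norm_real V p (\<lambda>w. c w - Ez P (smooth V S f w))
      + Lp_norm_real V p (\<lambda>w. sqrt (1 - (Corrz P (smooth V S f w) (smooth V S ft w))\<^sup>2)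
          * sqrt (Varz P (smooth V S f w))) / ennreal (sqrt (real M))
      + Lp_norm_real V p (\<lambda>w. sqrt (Ez P (sigmaS2 V S f w))) / ennreal (sqrt (real N))"
proof -
  define a g1 g2 where "a w = c w - Ez P (smooth V S f w)"
    and "g1 w = sqrt (1 - (Corrz P (smooth V S f w) (smooth V S ft w))\<^sup>2) * sqrt (Varz P (smooth V S f w))"
    and "g2 w = sqrt (Ez P (sigmaS2 V S f w))" for w
  note V = f.V_sets and [measurable] = c
  have [measurable]: "a \<in> borel_measurable borel" "g1 \<in> borel_measurable borel" "g2 \<in> borel_measurable borel"
    unfolding a_def g1_def g2_def Corrz_def Covz_def Varz_def by measurable
  have "Lp_norm V p (\<lambda>w. enn_powr (EEV P V f M N (\<lambda>zs ws.
              (c w - cv_estimator P V S f ft M N w zs ws)\<^sup>2)) (1/2))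
      = Lp_norm V p (\<lambda>w. ennreal (sqrt (cv_mse M N (c w) w)))"
    using EEV_eq_cv_mse[OF M N] cv_mse_nonneg by (simp add: enn_powr_ennreal powr_half_sqrt)
  also have "\<dots> \<le> Lp_norm_real V p (\<lambda>w. \<bar>a w\<bar> + g1 w / sqrt (real M) + g2 w / sqrt (real N))"
    unfolding Lp_norm_real_def
  proof (rule Lp_norm_mono[OF V])
    show "ennreal (sqrt (cv_mse M N (c w) w))
        \<le> ennreal \<bar>\<bar>a w\<bar> + g1 w / sqrt (real M) + g2 w / sqrt (real N)\<bar>" if "w \<in> V" for w
      using sqrt_cv_mse_le[OF M N var_ft[OF that] var_f[OF that], of "c w"]
      unfolding a_def g1_def g2_def by (intro ennreal_leI) linarith
  qed measurable
  also have "\<dots> \<le> Lp_norm_real V p (\<lambda>w. \<bar>a w\<bar> + g1 w / sqrt (real M))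
      + Lp_norm_real V p (\<lambda>w. g2 w / sqrt (real N))"
    by (rule Lp_norm_real_add[OF V p]; measurable)
  also have "\<dots> \<le> Lp_norm_real V p (\<lambda>w. \<bar>a w\<bar>) + Lp_norm_real V p (\<lambda>w. g1 w / sqrt (real M))
      + Lp_norm_real V p (\<lambda>w. g2 w / sqrt (real N))"
    by (intro add_mono order_refl Lp_norm_real_add[OF V p]; measurable)
  also have "\<dots> \<le> Lp_norm_real V p a + Lp_norm_real V p g1 / ennreal (sqrt (real M))
      + Lp_norm_real V p g2 / ennreal (sqrt (real N))"
    using M N by (intro add_mono Lp_norm_real_divide_le[OF V p]) (auto simp: Lp_norm_real_def)
  finally show ?thesis
    unfolding a_def g1_def g2_def .
qed

end

theorem theorem4:
  fixes \<Psi> :: "'z::euclidean_space \<Rightarrow> real"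
    and V :: "real set"
    and f ft :: "'z \<Rightarrow> real \<Rightarrow> real"
    and S :: "real \<Rightarrow> real"
    and dw q C :: real
    and p :: ennreal
    and M N :: nat
  defines "P \<equiv> density lborel (\<lambda>z. ennreal (\<Psi> z))"
  assumes Psi_meas: "\<Psi> \<in> borel_measurable borel"
    and Psi_nonneg: "\<And>z. 0 \<le> \<Psi> z"
    and Psi_prob: "prob_space P"
    and V_meas: "V \<in> sets lborel"
    and f_meas: "case_prod f \<in> borel_measurable (borel \<Otimes>\<^sub>M borel)"
    and ft_meas: "case_prod ft \<in> borel_measurable (borel \<Otimes>\<^sub>M borel)"
    and f_nonneg: "\<And>z v. v \<in> V \<Longrightarrow> 0 \<le> f z v"
    and ft_nonneg: "\<And>z v. v \<in> V \<Longrightarrow> 0 \<le> ft z v"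
    and f_dens: "\<And>z. set_integrable lborel V (f z) \<and> (\<integral>v\<in>V. f z v \<partial>lborel) = 1"
    and ft_dens: "\<And>z. set_integrable lborel V (ft z) \<and> (\<integral>v\<in>V. ft z v \<partial>lborel) = 1"
    and S_meas: "S \<in> borel_measurable borel"
    and S_nonneg: "\<And>x. 0 \<le> S x"
    and S_bdd: "\<exists>B. \<forall>x. S x \<le> B"
    and dw_pos: "0 < dw"
    and var_ft_pos: "\<And>w. w \<in> V \<Longrightarrow> Varz P (smooth V S ft w) > 0"
    and var_f_pos: "\<And>w. w \<in> V \<Longrightarrow> Varz P (smooth V S f w) > 0"
    and M_pos: "1 \<le> M" and N_pos: "1 \<le> N"
    and p_ge: "1 \<le> p" and q_pos: "0 < q"
    and bias: "Lp_norm_real V p (\<lambda>w. Ez P (\<lambda>z. f z w) - Ez P (smooth V S f w))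
                 \<le> ennreal (C * dw powr q)"
  shows "Lp_norm V p (\<lambda>w. enn_powr (EEV P V f M N (\<lambda>zs ws.
              (Ez P (\<lambda>z. f z w) - cv_estimator P V S f ft M N w zs ws)\<^sup>2)) (1/2))
         \<le> Lp_norm_real V p (\<lambda>w. sqrt (1 - (Corrz P (smooth V S f w) (smooth V S ft w))\<^sup>2)
                                  * sqrt (Varz P (smooth V S f w))) / ennreal (sqrt (real M))
           + Lp_norm_real V p (\<lambda>w. sqrt (Ez P (sigmaS2 V S f w))) / ennreal (sqrt (real N))
           + ennreal (C * dw powr q)"
proof -
  obtain B where "\<And>x. S x \<le> B" using S_bdd by blast
  then interpret control_variate_setting P V S B f ft
    unfolding control_variate_setting_def smoothed_density_family_def
    using Psi_prob V_meas f_meas ft_meas f_nonneg ft_nonneg f_dens ft_dens S_meas S_nonneg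
    by (simp add: P_def)
  have "(\<lambda>w. Ez P (\<lambda>z. f z w)) \<in> borel_measurable borel"
    by measurable
  from Lp_norm_rmse_le[OF p_ge M_pos N_pos this var_ft_pos var_f_pos] bias
  show ?thesis
    by (simp add: ac_simps add_mono order_trans)
qed

end
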